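(* Let $k\geq1$ and $d_1,\dots,d_k\geq2$ be integers, let $T=W_{d_1}\otimes\cdots\otimes W_{d_k}$, and let $\mathscr{V}_{d_1,\dots,d_k}=\nu_{d_1,\dots,d_k}((\mathbb{P}^1)^k)$ be the Segre–Veronese variety. Let $\Gamma$ be any irreducible component of $\mathcal{S}(T,\mathscr{V}_{d_1,\dots,d_k})$. Then $\dim\Gamma\geq k$, and for every $p=(p_1,\dots,p_k)\in(\mathbb{P}^1)^k$ with $p_i\neq[x_i],[y_i]$ for all $i$, there exists $A\in\Gamma$ with $\nu_{d_1,\dots,d_k}(p)\in A$.
   Context: On the $i$-th factor use a basis $\{x_i,y_i\}$ of $\mathbb{C}^2$ and identify $S^d\mathbb{C}^2$ with binary forms; $W_{d_i}=x_i^{d_i-1}y_i$. $\nu_{d_1,\dots,d_k}:(\mathbb{P}^1)^k\to\mathbb{P}(S^{d_1}\mathbb{C}^2\otimes\cdots\otimes S^{d_k}\mathbb{C}^2)$ sends $([v_1],\dots,[v_k])\mapsto[v_1^{d_1}\otimes\cdots\otimes v_k^{d_k}]$. For a nondegenerate variety $X$ and a point $q$, $R_X(q)$ is the minimal $r$ such that $q$ lies in the span of $r$ points of $X$, and $\mathcal{S}(q,X)=\{(x_1,\dots,x_r)\in X^{(r)}: q\in\langle x_1,\dots,x_r\rangle\}$ with $r=R_X(q)$, where $X^{(r)}=X^r/\mathfrak{S}_r$ is the symmetric power; this is a constructible set whose elements are regarded as sets of $r$ points of $X$. *)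

theory Defs
  imports "HOL-Analysis.Analysis"
begin

inductive_set polyfun :: "((nat \<Rightarrow> complex) \<Rightarrow> complex) set" where
  pf_const: "(\<lambda>x. c) \<in> polyfun"
| pf_var: "(\<lambda>x. x i) \<in> polyfun"
| pf_add: "f \<in> polyfun \<Longrightarrow> g \<in> polyfun \<Longrightarrow> (\<lambda>x. f x + g x) \<in> polyfun"
| pf_mult: "f \<in> polyfun \<Longrightarrow> g \<in> polyfun \<Longrightarrow> (\<lambda>x. f x * g x) \<in> polyfun"

text \<open>C^n, realised as the functions vanishing from index n on.\<close>
definition affsp :: "nat \<Rightarrow> (nat \<Rightarrow> complex) set" where
  "affsp n = {x. \<forall>i\<ge>n. x i = 0}"

definition zeroset :: "((nat \<Rightarrow> complex) \<Rightarrow> complex) set \<Rightarrow> (nat \<Rightarrow> complex) set" where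
  "zeroset F = {x. \<forall>f\<in>F. f x = 0}"

definition zariski :: "nat \<Rightarrow> (nat \<Rightarrow> complex) topology" where
  "zariski n = topology (\<lambda>U. \<exists>F. F \<subseteq> polyfun \<and> U = affsp n - zeroset F)"

definition line :: "complex \<times> complex \<Rightarrow> (complex \<times> complex) set" where
  "line v = {(c * fst v, c * snd v) | c. True}"

text \<open>A point of (P^1)^k: a k-tuple of lines in C^2 (entries beyond k fixed to {}).\<close>
definition P1k :: "nat \<Rightarrow> (nat \<Rightarrow> (complex \<times> complex) set) set" where
  "P1k k = {p. (\<forall>i<k. \<exists>v. v \<noteq> 0 \<and> p i = line v) \<and> (\<forall>i\<ge>k. p i = {})}"

text \<open>A tensor is given by its coefficients on the monomials
  x_1^{d_1-e_1} y_1^{e_1} \<cdots> x_k^{d_k-e_k} y_k^{e_k}, indexed by e.\<close>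
definition mindex :: "(nat \<Rightarrow> nat) \<Rightarrow> nat \<Rightarrow> (nat \<Rightarrow> nat) \<Rightarrow> bool" where
  "mindex d k e \<longleftrightarrow> (\<forall>i<k. e i \<le> d i) \<and> (\<forall>i\<ge>k. e i = 0)"

text \<open>v_1^{d_1} \<otimes> ... \<otimes> v_k^{d_k} with v_i = a_i x_i + b_i y_i.\<close>
definition nuv :: "(nat \<Rightarrow> nat) \<Rightarrow> nat \<Rightarrow> (nat \<Rightarrow> complex \<times> complex) \<Rightarrow> (nat \<Rightarrow> nat) \<Rightarrow> complex" where
  "nuv d k v e = (if mindex d k e then
      (\<Prod>i<k. of_nat (d i choose e i) * fst (v i) ^ (d i - e i) * snd (v i) ^ e i) else 0)"

text \<open>T = W_{d_1} \<otimes> ... \<otimes> W_{d_k}, W_d = x^{d-1} y.\<close>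
definition Wtensor :: "(nat \<Rightarrow> nat) \<Rightarrow> nat \<Rightarrow> (nat \<Rightarrow> nat) \<Rightarrow> complex" where
  "Wtensor d k e = (if mindex d k e \<and> (\<forall>i<k. e i = 1) then 1 else 0)"

definition in_span :: "(nat \<Rightarrow> nat) \<Rightarrow> nat \<Rightarrow> ((nat \<Rightarrow> nat) \<Rightarrow> complex)
    \<Rightarrow> (nat \<Rightarrow> (complex \<times> complex) set) set \<Rightarrow> bool" where
  "in_span d k q A \<longleftrightarrow> finite A \<and>
     (\<exists>c v. (\<forall>p\<in>A. \<forall>i<k. v p i \<noteq> 0 \<and> p i = line (v p i)) \<and>
            q = (\<lambda>e. \<Sum>p\<in>A. c p * nuv d k (v p) e))"

definition SV_rank :: "(nat \<Rightarrow> nat) \<Rightarrow> nat \<Rightarrow> ((nat \<Rightarrow> nat) \<Rightarrow> complex) \<Rightarrow> nat" where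
  "SV_rank d k q = (LEAST r. \<exists>A. A \<subseteq> P1k k \<and> card A = r \<and> in_span d k q A)"

definition decomp_set :: "(nat \<Rightarrow> nat) \<Rightarrow> nat \<Rightarrow> ((nat \<Rightarrow> nat) \<Rightarrow> complex)
    \<Rightarrow> (nat \<Rightarrow> (complex \<times> complex) set) set set" where
  "decomp_set d k q = {A. A \<subseteq> P1k k \<and> card A = SV_rank d k q \<and> in_span d k q A}"

text \<open>Coordinates of r k-tuples of vectors of C^2 inside C^{2kr}.\<close>
definition tup_point :: "nat \<Rightarrow> (nat \<Rightarrow> complex) \<Rightarrow> nat \<Rightarrow> nat \<Rightarrow> (complex \<times> complex) set" where
  "tup_point k x j = (\<lambda>i. if i < k then line (x (2 * (k * j + i)), x (2 * (k * j + i) + 1)) else {})"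

definition tup_dom :: "nat \<Rightarrow> nat \<Rightarrow> (nat \<Rightarrow> complex) set" where
  "tup_dom k r = {x \<in> affsp (2 * k * r).
      (\<forall>j<r. \<forall>i<k. (x (2 * (k * j + i)), x (2 * (k * j + i) + 1)) \<noteq> 0) \<and>
      (\<forall>j<r. \<forall>j'<r. j \<noteq> j' \<longrightarrow> tup_point k x j \<noteq> tup_point k x j')}"

definition tup_set :: "nat \<Rightarrow> nat \<Rightarrow> (nat \<Rightarrow> complex) \<Rightarrow> (nat \<Rightarrow> (complex \<times> complex) set) set" where
  "tup_set k r x = tup_point k x ` {..<r}"

text \<open>Quotient of the Zariski topology on the (multi-cone over the) distinct locus of X^r.\<close>
definition sym_zariski :: "nat \<Rightarrow> nat \<Rightarrow> (nat \<Rightarrow> (complex \<times> complex) set) set topology" where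
  "sym_zariski k r = topology (\<lambda>U. U \<subseteq> tup_set k r ` tup_dom k r \<and>
      openin (subtopology (zariski (2 * k * r)) (tup_dom k r)) (tup_dom k r \<inter> tup_set k r -` U))"

definition irreducible_in :: "'a topology \<Rightarrow> 'a set \<Rightarrow> bool" where
  "irreducible_in X S \<longleftrightarrow> S \<noteq> {} \<and> S \<subseteq> topspace X \<and>
     (\<forall>C1 C2. closedin X C1 \<and> closedin X C2 \<and> S \<subseteq> C1 \<union> C2 \<longrightarrow> S \<subseteq> C1 \<or> S \<subseteq> C2)"

definition irreducible_component :: "'a topology \<Rightarrow> 'a set \<Rightarrow> 'a set \<Rightarrow> bool" where
  "irreducible_component X S G \<longleftrightarrow> G \<subseteq> S \<and> irreducible_in X G \<and>
     (\<forall>G'. G \<subseteq> G' \<and> G' \<subseteq> S \<and> irreducible_in X G' \<longrightarrow> G' = G)"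

definition dim_ge :: "'a topology \<Rightarrow> 'a set \<Rightarrow> nat \<Rightarrow> bool" where
  "dim_ge X S n \<longleftrightarrow> (\<exists>Z :: nat \<Rightarrow> 'a set.
     (\<forall>j\<le>n. closedin (subtopology X S) (Z j) \<and> irreducible_in X (Z j)) \<and>
     (\<forall>j<n. Z j \<subset> Z (Suc j)))"

end

theory Submission
  imports Defs "HOL-Computational_Algebra.Polynomial"
begin

text \<open>
  The torus \<open>(\<complex>\<^sup>*)\<^sup>k\<close> acting by \<open>y\<^sub>i \<mapsto> t\<^sub>i y\<^sub>i\<close> on the \<open>i\<close>-th factor multiplies \<open>T\<close> by
  \<open>t\<^sub>1 \<cdots> t\<^sub>k\<close>, hence maps decompositions of \<open>T\<close> to decompositions of \<open>T\<close>. Each coordinate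
  subgroup acts continuously on the symmetric power, and along it the set of parameters moving a
  given point into a given closed set is finite or everything, because the coordinates depend
  affinely on the parameter. So the union of the translates of an irreducible set is irreducible,
  and by maximality every irreducible component \<open>\<Gamma>\<close> is stable under the torus.

  Since \<open>T\<close> has a nonzero coefficient on \<open>x\<^sub>1^(d\<^sub>1-1) y\<^sub>1 \<cdots> x\<^sub>k^(d\<^sub>k-1) y\<^sub>k\<close>, every decomposition
  contains a point none of whose coordinates is \<open>[x\<^sub>i]\<close> or \<open>[y\<^sub>i]\<close>, and the torus moves it to any
  other such point. Finally, for a decomposition \<open>A \<in> \<Gamma>\<close>, the closures in \<open>\<Gamma>\<close> of the orbits of
  \<open>A\<close> under the first \<open>j\<close> coordinate subgroups, \<open>j = 0, \<dots>, k\<close>, form a strictly increasing chain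
  of irreducible closed sets.
\<close>

section \<open>The Zariski topology on the symmetric power\<close>

lemma zeroset_iff: "x \<in> zeroset F \<longleftrightarrow> (\<forall>f\<in>F. f x = 0)"
  by (simp add: zeroset_def)

lemma zeroset_Un:
  "zeroset F \<union> zeroset G = zeroset {(\<lambda>x. f x * g x) | f g. f \<in> F \<and> g \<in> G}"
proof
  show "zeroset F \<union> zeroset G \<subseteq> zeroset {(\<lambda>x. f x * g x) | f g. f \<in> F \<and> g \<in> G}"
    by (auto simp: zeroset_iff)
  show "zeroset {(\<lambda>x. f x * g x) | f g. f \<in> F \<and> g \<in> G} \<subseteq> zeroset F \<union> zeroset G"
  proof
    fix x assume x: "x \<in> zeroset {(\<lambda>x. f x * g x) | f g. f \<in> F \<and> g \<in> G}"
    show "x \<in> zeroset F \<union> zeroset G"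
    proof (rule ccontr)
      assume "x \<notin> zeroset F \<union> zeroset G"
      then obtain f g where "f \<in> F" "g \<in> G" "f x \<noteq> 0" "g x \<noteq> 0"
        by (auto simp: zeroset_iff)
      then show False
        using x[unfolded zeroset_iff, rule_format, of "\<lambda>x. f x * g x"] by auto
    qed
  qed
qed

lemma istopology_zariski: "istopology (\<lambda>U. \<exists>F. F \<subseteq> polyfun \<and> U = affsp n - zeroset F)"
  unfolding istopology_def
proof (intro conjI allI impI)
  fix S T
  assume "\<exists>F. F \<subseteq> polyfun \<and> S = affsp n - zeroset F" "\<exists>G. G \<subseteq> polyfun \<and> T = affsp n - zeroset G"
  then obtain F G where FG: "F \<subseteq> polyfun" "G \<subseteq> polyfun" "S = affsp n - zeroset F" "T = affsp n - zeroset G"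
    by blast
  have "{(\<lambda>x. f x * g x) | f g. f \<in> F \<and> g \<in> G} \<subseteq> polyfun"
    using FG by (auto intro: polyfun.pf_mult)
  moreover have "S \<inter> T = affsp n - zeroset {(\<lambda>x. f x * g x) | f g. f \<in> F \<and> g \<in> G}"
    unfolding zeroset_Un[symmetric] FG by blast
  ultimately show "\<exists>H. H \<subseteq> polyfun \<and> S \<inter> T = affsp n - zeroset H"
    by blast
next
  fix K assume "\<forall>U\<in>K. \<exists>F. F \<subseteq> polyfun \<and> U = affsp n - zeroset F"
  then obtain FF where "\<forall>U\<in>K. FF U \<subseteq> polyfun \<and> U = affsp n - zeroset (FF U)"
    by (rule bchoice[THEN exE])
  then have FF_poly: "\<Union>(FF ` K) \<subseteq> polyfun"
    and FF_eq: "\<And>U. U \<in> K \<Longrightarrow> U = affsp n - zeroset (FF U)"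
    by auto
  have "(\<Union>U\<in>K. U) = (\<Union>U\<in>K. affsp n - zeroset (FF U))"
    using FF_eq by (rule SUP_cong[OF refl])
  then have "\<Union>K = (\<Union>U\<in>K. affsp n - zeroset (FF U))"
    by simp
  also have "\<dots> = affsp n - zeroset (\<Union>(FF ` K))"
    by (auto simp: zeroset_iff)
  finally show "\<exists>F. F \<subseteq> polyfun \<and> \<Union>K = affsp n - zeroset F"
    using FF_poly by blast
qed

lemma openin_zariski: "openin (zariski n) U \<longleftrightarrow> (\<exists>F. F \<subseteq> polyfun \<and> U = affsp n - zeroset F)"
  unfolding zariski_def using istopology_zariski by simp

lemma istopology_sym_zariski:
  "istopology (\<lambda>U. U \<subseteq> tup_set k r ` tup_dom k r \<and>
      openin (subtopology (zariski (2 * k * r)) (tup_dom k r)) (tup_dom k r \<inter> tup_set k r -` U))"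
  (is "istopology ?open")
  unfolding istopology_def
proof (rule conjI; intro allI impI)
  fix S T assume S: "?open S" and T: "?open T"
  have "tup_dom k r \<inter> tup_set k r -` (S \<inter> T) =
      (tup_dom k r \<inter> tup_set k r -` S) \<inter> (tup_dom k r \<inter> tup_set k r -` T)"
    by blast
  then show "?open (S \<inter> T)"
    using S openin_Int[OF S[THEN conjunct2] T[THEN conjunct2]] by auto
next
  fix K assume K: "\<forall>U\<in>K. ?open U"
  then have "openin (subtopology (zariski (2 * k * r)) (tup_dom k r))
      (\<Union>U\<in>K. tup_dom k r \<inter> tup_set k r -` U)"
    by (intro openin_Union) auto
  moreover have "tup_dom k r \<inter> tup_set k r -` \<Union>K = (\<Union>U\<in>K. tup_dom k r \<inter> tup_set k r -` U)"
    by blast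
  moreover have "\<Union>K \<subseteq> tup_set k r ` tup_dom k r"
    using K by blast
  ultimately show "?open (\<Union>K)"
    by simp
qed

lemma openin_sym_zariski:
  "openin (sym_zariski k r) U \<longleftrightarrow> U \<subseteq> tup_set k r ` tup_dom k r \<and>
     openin (subtopology (zariski (2 * k * r)) (tup_dom k r)) (tup_dom k r \<inter> tup_set k r -` U)"
  unfolding sym_zariski_def using istopology_sym_zariski by simp

lemma openin_sym_zariski_iff:
  "openin (sym_zariski k r) U \<longleftrightarrow> U \<subseteq> tup_set k r ` tup_dom k r \<and>
     (\<exists>F. F \<subseteq> polyfun \<and> (\<forall>x\<in>tup_dom k r. tup_set k r x \<in> U \<longleftrightarrow> x \<notin> zeroset F))"
proof -
  have D: "tup_dom k r \<subseteq> affsp (2 * k * r)"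
    unfolding tup_dom_def by blast
  have "openin (subtopology (zariski (2 * k * r)) (tup_dom k r)) (tup_dom k r \<inter> tup_set k r -` U) \<longleftrightarrow>
      (\<exists>F. F \<subseteq> polyfun \<and> (\<forall>x\<in>tup_dom k r. tup_set k r x \<in> U \<longleftrightarrow> x \<notin> zeroset F))"
  proof
    assume "openin (subtopology (zariski (2 * k * r)) (tup_dom k r)) (tup_dom k r \<inter> tup_set k r -` U)"
    then obtain F where "F \<subseteq> polyfun"
      "tup_dom k r \<inter> tup_set k r -` U = (affsp (2 * k * r) - zeroset F) \<inter> tup_dom k r"
      unfolding openin_subtopology openin_zariski by blast
    then show "\<exists>F. F \<subseteq> polyfun \<and> (\<forall>x\<in>tup_dom k r. tup_set k r x \<in> U \<longleftrightarrow> x \<notin> zeroset F)"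
      using D by blast
  next
    assume "\<exists>F. F \<subseteq> polyfun \<and> (\<forall>x\<in>tup_dom k r. tup_set k r x \<in> U \<longleftrightarrow> x \<notin> zeroset F)"
    then obtain F where F: "F \<subseteq> polyfun" "\<forall>x\<in>tup_dom k r. tup_set k r x \<in> U \<longleftrightarrow> x \<notin> zeroset F"
      by blast
    then have "tup_dom k r \<inter> tup_set k r -` U = (affsp (2 * k * r) - zeroset F) \<inter> tup_dom k r"
      using D by blast
    then show "openin (subtopology (zariski (2 * k * r)) (tup_dom k r)) (tup_dom k r \<inter> tup_set k r -` U)"
      unfolding openin_subtopology openin_zariski using F(1) by blast
  qed
  then show ?thesis
    unfolding openin_sym_zariski by blast
qed

lemma topspace_sym_zariski: "topspace (sym_zariski k r) = tup_set k r ` tup_dom k r"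
proof
  show "topspace (sym_zariski k r) \<subseteq> tup_set k r ` tup_dom k r"
    using openin_sym_zariski_iff openin_topspace by blast
  have "{\<lambda>x. 1} \<subseteq> polyfun" "\<forall>x. x \<notin> zeroset {\<lambda>x. 1}"
    by (auto simp: zeroset_iff intro: polyfun.pf_const)
  then have "openin (sym_zariski k r) (tup_set k r ` tup_dom k r)"
    unfolding openin_sym_zariski_iff by blast
  then show "tup_set k r ` tup_dom k r \<subseteq> topspace (sym_zariski k r)"
    by (rule openin_subset)
qed

lemma closedin_sym_zariski_iff:
  "closedin (sym_zariski k r) C \<longleftrightarrow> C \<subseteq> tup_set k r ` tup_dom k r \<and>
     (\<exists>F. F \<subseteq> polyfun \<and> (\<forall>x\<in>tup_dom k r. tup_set k r x \<in> C \<longleftrightarrow> x \<in> zeroset F))"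
proof -
  have "(\<forall>x\<in>tup_dom k r. tup_set k r x \<in> tup_set k r ` tup_dom k r - C \<longleftrightarrow> x \<notin> zeroset F) \<longleftrightarrow>
      (\<forall>x\<in>tup_dom k r. tup_set k r x \<in> C \<longleftrightarrow> x \<in> zeroset F)" for F
    by blast
  note complement = this
  show ?thesis
    unfolding closedin_def topspace_sym_zariski openin_sym_zariski_iff complement by blast
qed

lemma polyfun_scale_vars: "f \<in> polyfun \<Longrightarrow> (\<lambda>x. f (\<lambda>m. c m * x m)) \<in> polyfun"
proof (induction rule: polyfun.induct)
  case (pf_var i)
  show ?case by (intro polyfun.pf_mult polyfun.pf_const polyfun.pf_var)
qed (simp_all add: polyfun.pf_const polyfun.pf_add polyfun.pf_mult)

lemma polyfun_prod:
  "(\<And>m. m < n \<Longrightarrow> f m \<in> polyfun) \<Longrightarrow> (\<lambda>x. \<Prod>m<(n::nat). f m x) \<in> polyfun"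
proof (induction n)
  case 0
  show ?case by (simp add: polyfun.pf_const)
next
  case (Suc n)
  then have "(\<lambda>x. (\<Prod>m<n. f m x) * f n x) \<in> polyfun"
    by (intro polyfun.pf_mult) simp_all
  then show ?case by (simp add: mult.commute)
qed

lemma polyfun_cross_diff: "(\<lambda>x. x i * b - x j * a) \<in> polyfun"
proof -
  have "(\<lambda>x. x i * b + (- a) * x j) \<in> polyfun"
    by (intro polyfun.intros)
  then show ?thesis
    by (simp add: algebra_simps)
qed

lemma polyfun_on_line: "f \<in> polyfun \<Longrightarrow> \<exists>p. \<forall>s. f (\<lambda>m. a m + s * b m) = poly p s"
proof (induction rule: polyfun.induct)
  case (pf_const c)
  show ?case by (intro exI[of _ "[:c:]"]) simp
next
  case (pf_var i)
  show ?case by (intro exI[of _ "[:a i, b i:]"]) (simp add: algebra_simps)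
next
  case (pf_add f g)
  then obtain p q where "\<forall>s. f (\<lambda>m. a m + s * b m) = poly p s" "\<forall>s. g (\<lambda>m. a m + s * b m) = poly q s"
    by blast
  then show ?case by (intro exI[of _ "p + q"]) simp
next
  case (pf_mult f g)
  then obtain p q where "\<forall>s. f (\<lambda>m. a m + s * b m) = poly p s" "\<forall>s. g (\<lambda>m. a m + s * b m) = poly q s"
    by blast
  then show ?case by (intro exI[of _ "p * q"]) simp
qed

lemma irreducible_in_sing: "A \<in> topspace X \<Longrightarrow> irreducible_in X {A}"
  unfolding irreducible_in_def by simp

lemma irreducible_in_closure_of_between:
  assumes S: "irreducible_in X S" and "S \<subseteq> Z" "Z \<subseteq> X closure_of S"
  shows "irreducible_in X Z"
proof -
  have "Z \<subseteq> C1 \<or> Z \<subseteq> C2" if C: "closedin X C1" "closedin X C2" "Z \<subseteq> C1 \<union> C2" for C1 C2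
  proof -
    have "S \<subseteq> C1 \<union> C2"
      using \<open>S \<subseteq> Z\<close> C(3) by (rule order_trans)
    then have "S \<subseteq> C1 \<or> S \<subseteq> C2"
      using S C(1,2) unfolding irreducible_in_def by blast
    then have "X closure_of S \<subseteq> C1 \<or> X closure_of S \<subseteq> C2"
      using closure_of_minimal C(1,2) by metis
    then show ?thesis
      using \<open>Z \<subseteq> X closure_of S\<close> by blast
  qed
  moreover have "Z \<subseteq> topspace X"
    using \<open>Z \<subseteq> X closure_of S\<close> closure_of_subset_topspace by (rule order_trans)
  moreover have "Z \<noteq> {}"
    using S \<open>S \<subseteq> Z\<close> unfolding irreducible_in_def by blast
  ultimately show ?thesis
    unfolding irreducible_in_def by blast
qed

lemma closedin_all_translates_in:
  assumes "P \<noteq> {}" "\<And>s. s \<in> P \<Longrightarrow> continuous_map X X (g s)" "closedin X C"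
  shows "closedin X {A \<in> topspace X. \<forall>s\<in>P. g s A \<in> C}"
proof -
  have "{A \<in> topspace X. \<forall>s\<in>P. g s A \<in> C} = (\<Inter>s\<in>P. {A \<in> topspace X. g s A \<in> C})"
    using assms(1) by blast
  moreover have "closedin X (\<Inter>s\<in>P. {A \<in> topspace X. g s A \<in> C})"
    using assms closedin_continuous_map_preimage by (intro closedin_INT) blast+
  ultimately show ?thesis
    by simp
qed

lemma irreducible_in_UN_translates:
  assumes S: "irreducible_in X S" and P: "infinite P"
    and cont: "\<And>s. s \<in> P \<Longrightarrow> continuous_map X X (g s)"
    and finite_or_all:
      "\<And>A C. A \<in> S \<Longrightarrow> closedin X C \<Longrightarrow> finite {s \<in> P. g s A \<in> C} \<or> (\<forall>s\<in>P. g s A \<in> C)"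
  shows "irreducible_in X (\<Union>s\<in>P. g s ` S)"
proof -
  have "P \<noteq> {}"
    using P by auto
  have S_top: "S \<subseteq> topspace X" and "S \<noteq> {}"
    and S_irr: "\<And>C1 C2. closedin X C1 \<Longrightarrow> closedin X C2 \<Longrightarrow> S \<subseteq> C1 \<union> C2 \<Longrightarrow> S \<subseteq> C1 \<or> S \<subseteq> C2"
    using S unfolding irreducible_in_def by blast+
  define K where "K C = {A \<in> topspace X. \<forall>s\<in>P. g s A \<in> C}" for C
  have K_closed: "closedin X (K C)" if "closedin X C" for C
    unfolding K_def using closedin_all_translates_in[OF \<open>P \<noteq> {}\<close> cont that] .
  have "(\<Union>s\<in>P. g s ` S) \<subseteq> C1 \<or> (\<Union>s\<in>P. g s ` S) \<subseteq> C2"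
    if C: "closedin X C1" "closedin X C2" "(\<Union>s\<in>P. g s ` S) \<subseteq> C1 \<union> C2" for C1 C2
  proof -
    have "S \<subseteq> K C1 \<union> K C2"
    proof
      fix A assume A: "A \<in> S"
      have "P \<subseteq> {s \<in> P. g s A \<in> C1} \<union> {s \<in> P. g s A \<in> C2}"
        using A C(3) by blast
      then have "infinite {s \<in> P. g s A \<in> C1} \<or> infinite {s \<in> P. g s A \<in> C2}"
        using P by (meson finite_UnI finite_subset)
      then have "(\<forall>s\<in>P. g s A \<in> C1) \<or> (\<forall>s\<in>P. g s A \<in> C2)"
        using finite_or_all[OF A C(1)] finite_or_all[OF A C(2)] by blast
      then show "A \<in> K C1 \<union> K C2"
        unfolding K_def using A S_top by blast
    qed
    then have "S \<subseteq> K C1 \<or> S \<subseteq> K C2"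
      by (rule S_irr[OF K_closed[OF C(1)] K_closed[OF C(2)]])
    then show ?thesis
      unfolding K_def by blast
  qed
  moreover have "(\<Union>s\<in>P. g s ` S) \<subseteq> topspace X"
  proof (rule UN_least)
    fix s assume "s \<in> P"
    show "g s ` S \<subseteq> topspace X"
      using continuous_map_image_subset_topspace[OF cont[OF \<open>s \<in> P\<close>]] S_top by blast
  qed
  moreover have "(\<Union>s\<in>P. g s ` S) \<noteq> {}"
    using \<open>S \<noteq> {}\<close> \<open>P \<noteq> {}\<close> by blast
  ultimately show ?thesis
    unfolding irreducible_in_def by blast
qed

lemma line_smult:
  assumes "c \<noteq> 0"
  shows "line (c * u, c * v) = line (u, v)"
proof -
  have "(\<exists>c'. z = (c' * (c * u), c' * (c * v))) \<longleftrightarrow> (\<exists>c'. z = (c' * u, c' * v))" for z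
  proof
    assume "\<exists>c'. z = (c' * (c * u), c' * (c * v))"
    then show "\<exists>c'. z = (c' * u, c' * v)"
      by (metis mult.assoc)
  next
    assume "\<exists>c'. z = (c' * u, c' * v)"
    then obtain c' where "z = (c' * u, c' * v)" by blast
    then have "z = ((c' / c) * (c * u), (c' / c) * (c * v))"
      using assms by simp
    then show "\<exists>c'. z = (c' * (c * u), c' * (c * v))" by blast
  qed
  then show ?thesis
    unfolding line_def by simp
qed

lemma line_eq_imp_cross: "line (u, v) = line (a, b) \<Longrightarrow> u * b = v * a"
proof -
  assume "line (u, v) = line (a, b)"
  moreover have "(u, v) \<in> line (u, v)"
    unfolding line_def by (auto intro!: exI[of _ 1])
  ultimately obtain c where "u = c * a" "v = c * b"
    unfolding line_def by auto
  then show ?thesis by simp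
qed

lemma cross_imp_line_eq:
  assumes "(u, v) \<noteq> 0" "a \<noteq> 0" "u * b = v * a"
  shows "line (u, v) = line (a, b)"
proof -
  have "u \<noteq> 0"
    using assms by (auto simp: zero_prod_def)
  have "line (u, v) = line ((u / a) * a, (u / a) * b)"
    using assms(2,3) by (simp add: field_simps)
  also have "\<dots> = line (a, b)"
    using \<open>u \<noteq> 0\<close> assms(2) by (intro line_smult) simp
  finally show ?thesis .
qed

lemma line_neq_axes_iff:
  assumes "v \<noteq> 0"
  shows "line v \<noteq> line (1, 0) \<and> line v \<noteq> line (0, 1) \<longleftrightarrow> fst v \<noteq> 0 \<and> snd v \<noteq> 0"
proof
  assume axes: "line v \<noteq> line (1, 0) \<and> line v \<noteq> line (0, 1)"
  obtain a b where v: "v = (a, b)" by fastforce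
  have "b \<noteq> 0" if "a = 0"
    using assms that v by (simp add: zero_prod_def)
  moreover have "line v = line (0, 1)" if "a = 0"
    using line_smult[of b 0 1] calculation that v by simp
  moreover have "line v = line (1, 0)" if "b = 0"
    using line_smult[of a 1 0] assms that v by (simp add: zero_prod_def)
  ultimately show "fst v \<noteq> 0 \<and> snd v \<noteq> 0"
    using axes v by auto
next
  assume "fst v \<noteq> 0 \<and> snd v \<noteq> 0"
  moreover have "snd v = 0" if "line v = line (1, 0)"
    using line_eq_imp_cross[of "fst v" "snd v" 1 0] that by simp
  moreover have "fst v = 0" if "line v = line (0, 1)"
    using line_eq_imp_cross[of "fst v" "snd v" 0 1] that by simp
  ultimately show "line v \<noteq> line (1, 0) \<and> line v \<noteq> line (0, 1)"
    by blast
qed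

lemma line_scale_snd_transitive:
  assumes "a \<noteq> 0" "b \<noteq> 0" "a' \<noteq> 0" "b' \<noteq> 0"
  shows "\<exists>\<tau>. \<tau> \<noteq> 0 \<and> line (a, \<tau> * b) = line (a', b')"
proof -
  have "line (a, (a * b') / (a' * b) * b) = line ((a / a') * a', (a / a') * b')"
    using assms by (simp add: field_simps)
  also have "\<dots> = line (a', b')"
    using assms by (intro line_smult) simp
  finally show ?thesis
    using assms by (intro exI[of _ "(a * b') / (a' * b)"]) simp
qed

section \<open>The torus action\<close>

definition torus_act ::
    "(nat \<Rightarrow> complex) \<Rightarrow> (nat \<Rightarrow> (complex \<times> complex) set) \<Rightarrow> nat \<Rightarrow> (complex \<times> complex) set" where
  "torus_act t p = (\<lambda>i. (\<lambda>(a, b). (a, t i * b)) ` p i)"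

definition coord_torus :: "nat \<Rightarrow> complex \<Rightarrow> nat \<Rightarrow> complex" where
  "coord_torus j s = (\<lambda>i. if i = j then s else 1)"

text \<open>Coordinate \<open>2 (k j + i) + 1\<close> of a point of \<open>tup_dom k r\<close> is the \<open>y\<close>-coordinate of the
  \<open>i\<close>-th factor of its \<open>j\<close>-th point.\<close>
definition torus_coords :: "nat \<Rightarrow> (nat \<Rightarrow> complex) \<Rightarrow> (nat \<Rightarrow> complex) \<Rightarrow> nat \<Rightarrow> complex" where
  "torus_coords k t x = (\<lambda>m. (if odd m then t ((m div 2) mod k) else 1) * x m)"

lemma torus_act_line:
  assumes "p i = line (u, v)"
  shows "torus_act t p i = line (u, t i * v)"
proof -
  have "(\<lambda>(a, b). (a, t i * b)) ` line (u, v) = line (u, t i * v)"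
  proof (rule set_eqI)
    fix z
    show "z \<in> (\<lambda>(a, b). (a, t i * b)) ` line (u, v) \<longleftrightarrow> z \<in> line (u, t i * v)"
    proof
      assume "z \<in> (\<lambda>(a, b). (a, t i * b)) ` line (u, v)"
      then obtain c where "z = (c * u, t i * (c * v))"
        unfolding line_def by auto
      then have "z = (c * u, c * (t i * v))"
        by (simp add: algebra_simps)
      then show "z \<in> line (u, t i * v)"
        unfolding line_def by auto
    next
      assume "z \<in> line (u, t i * v)"
      then obtain c where "z = (\<lambda>(a, b). (a, t i * b)) (c * u, c * v)"
        unfolding line_def by (auto simp: algebra_simps)
      moreover have "(c * u, c * v) \<in> line (u, v)"
        unfolding line_def by auto
      ultimately show "z \<in> (\<lambda>(a, b). (a, t i * b)) ` line (u, v)"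
        by blast
    qed
  qed
  then show ?thesis
    unfolding torus_act_def assms by simp
qed

lemma torus_act_mult: "torus_act t (torus_act s p) = torus_act (\<lambda>i. t i * s i) p"
  unfolding torus_act_def by (auto simp: image_image fun_eq_iff mult.assoc split_beta)

lemma torus_act_one [simp]: "torus_act (\<lambda>i. 1) p = p"
  unfolding torus_act_def by (simp add: split_beta)

lemma inj_torus_act:
  assumes "\<forall>i. t i \<noteq> 0"
  shows "inj (torus_act t)"
proof (rule inj_on_inverseI)
  fix p
  show "torus_act (\<lambda>i. 1 / t i) (torus_act t p) = p"
    using assms by (simp add: torus_act_mult)
qed

lemma coord_torus_one [simp]: "coord_torus j 1 = (\<lambda>i. 1)"
  by (simp add: coord_torus_def)

lemma coord_torus_nonzero: "s \<noteq> 0 \<Longrightarrow> \<forall>i. coord_torus j s i \<noteq> 0"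
  by (simp add: coord_torus_def)

lemma torus_act_line_rep:
  assumes t: "\<forall>i. t i \<noteq> 0" and w: "w \<noteq> 0" "p i = line w"
  shows "(fst w, t i * snd w) \<noteq> 0 \<and> torus_act t p i = line (fst w, t i * snd w)"
proof
  show "(fst w, t i * snd w) \<noteq> 0"
    using t w(1) by (cases w) (auto simp: zero_prod_def)
  show "torus_act t p i = line (fst w, t i * snd w)"
    using w(2) by (intro torus_act_line) simp
qed

lemma torus_act_P1k:
  assumes t: "\<forall>i. t i \<noteq> 0" and p: "p \<in> P1k k"
  shows "torus_act t p \<in> P1k k"
proof -
  have "\<exists>w. w \<noteq> 0 \<and> torus_act t p i = line w" if "i < k" for i
  proof -
    from p that obtain w where "w \<noteq> 0" "p i = line w"
      unfolding P1k_def by blast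
    from torus_act_line_rep[of t w p i, OF t this] show ?thesis
      by blast
  qed
  moreover have "torus_act t p i = {}" if "k \<le> i" for i
    using p that unfolding P1k_def torus_act_def by simp
  ultimately show ?thesis
    unfolding P1k_def by blast
qed

lemma torus_coords_factor:
  assumes "i < k"
  shows "torus_coords k t x (2 * (k * j + i)) = x (2 * (k * j + i))"
    and "torus_coords k t x (2 * (k * j + i) + 1) = t i * x (2 * (k * j + i) + 1)"
  using assms by (simp_all add: torus_coords_def)

lemma tup_point_torus_coords: "tup_point k (torus_coords k t x) j = torus_act t (tup_point k x j)"
proof
  fix i
  show "tup_point k (torus_coords k t x) j i = torus_act t (tup_point k x j) i"
  proof (cases "i < k")
    case True
    have "tup_point k x j i = line (x (2 * (k * j + i)), x (2 * (k * j + i) + 1))"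
      using True by (simp only: tup_point_def if_True)
    then have "torus_act t (tup_point k x j) i = line (x (2 * (k * j + i)), t i * x (2 * (k * j + i) + 1))"
      by (rule torus_act_line)
    moreover have "tup_point k (torus_coords k t x) j i =
        line (x (2 * (k * j + i)), t i * x (2 * (k * j + i) + 1))"
      using True by (simp only: tup_point_def if_True torus_coords_factor)
    ultimately show ?thesis
      by simp
  next
    case False
    then show ?thesis
      by (simp add: tup_point_def torus_act_def)
  qed
qed

lemma tup_set_torus_coords: "tup_set k r (torus_coords k t x) = torus_act t ` tup_set k r x"
  unfolding tup_set_def by (simp add: image_image tup_point_torus_coords)

lemma torus_coords_tup_dom:
  assumes t: "\<forall>i. t i \<noteq> 0" and x: "x \<in> tup_dom k r"
  shows "torus_coords k t x \<in> tup_dom k r"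
proof -
  have "torus_coords k t x \<in> affsp (2 * k * r)"
    using x unfolding tup_dom_def affsp_def torus_coords_def by simp
  moreover have "(torus_coords k t x (2 * (k * j + i)), torus_coords k t x (2 * (k * j + i) + 1)) \<noteq> 0"
    if "j < r" "i < k" for j i
  proof -
    have "(x (2 * (k * j + i)), x (2 * (k * j + i) + 1)) \<noteq> 0"
      using x that unfolding tup_dom_def by blast
    then show ?thesis
      using t unfolding torus_coords_factor[OF that(2)] by (simp add: zero_prod_def)
  qed
  moreover have "tup_point k (torus_coords k t x) j \<noteq> tup_point k (torus_coords k t x) j'"
    if "j < r" "j' < r" "j \<noteq> j'" for j j'
    using x that unfolding tup_dom_def tup_point_torus_coords inj_eq[OF inj_torus_act[OF t]] by blast
  ultimately show ?thesis
    unfolding tup_dom_def by blast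
qed

lemma polyfun_comp_torus_coords: "f \<in> polyfun \<Longrightarrow> (\<lambda>x. f (torus_coords k t x)) \<in> polyfun"
  unfolding torus_coords_def by (rule polyfun_scale_vars)

lemma image_torus_act_topspace:
  assumes t: "\<forall>i. t i \<noteq> 0" and B: "B \<in> topspace (sym_zariski k r)"
  shows "torus_act t ` B \<in> topspace (sym_zariski k r)"
proof -
  obtain x where x: "x \<in> tup_dom k r" "B = tup_set k r x"
    using B unfolding topspace_sym_zariski by blast
  then have "torus_act t ` B = tup_set k r (torus_coords k t x)"
    by (simp add: tup_set_torus_coords)
  then show ?thesis
    unfolding topspace_sym_zariski using torus_coords_tup_dom[OF t x(1)] by (rule image_eqI)
qed

lemma continuous_map_torus_act:
  assumes t: "\<forall>i. t i \<noteq> 0"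
  shows "continuous_map (sym_zariski k r) (sym_zariski k r) (image (torus_act t))"
  unfolding continuous_map
proof (intro conjI allI impI)
  show "image (torus_act t) ` topspace (sym_zariski k r) \<subseteq> topspace (sym_zariski k r)"
    using image_torus_act_topspace[OF t] by blast
next
  fix U assume "openin (sym_zariski k r) U"
  then obtain F where F: "F \<subseteq> polyfun" "\<forall>x\<in>tup_dom k r. tup_set k r x \<in> U \<longleftrightarrow> x \<notin> zeroset F"
    unfolding openin_sym_zariski_iff by blast
  define F' where "F' = (\<lambda>f x. f (torus_coords k t x)) ` F"
  have poly: "F' \<subseteq> polyfun"
    unfolding F'_def using F(1) polyfun_comp_torus_coords by blast
  have eq: "tup_set k r x \<in> {B \<in> topspace (sym_zariski k r). torus_act t ` B \<in> U} \<longleftrightarrow>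
      x \<notin> zeroset F'" if x: "x \<in> tup_dom k r" for x
  proof -
    have "tup_set k r x \<in> {B \<in> topspace (sym_zariski k r). torus_act t ` B \<in> U} \<longleftrightarrow>
        tup_set k r (torus_coords k t x) \<in> U"
      using x by (simp add: topspace_sym_zariski tup_set_torus_coords)
    also have "\<dots> \<longleftrightarrow> torus_coords k t x \<notin> zeroset F"
      using F(2) torus_coords_tup_dom[OF t x] by blast
    also have "\<dots> \<longleftrightarrow> x \<notin> zeroset F'"
      unfolding F'_def zeroset_iff by simp
    finally show ?thesis .
  qed
  have sub: "{B \<in> topspace (sym_zariski k r). torus_act t ` B \<in> U} \<subseteq> tup_set k r ` tup_dom k r"
    unfolding topspace_sym_zariski by blast
  show "openin (sym_zariski k r) {B \<in> topspace (sym_zariski k r). torus_act t ` B \<in> U}"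
    unfolding openin_sym_zariski_iff using sub poly eq by blast
qed

lemma torus_coords_coord_torus_affine:
  "\<exists>a b. \<forall>s. torus_coords k (coord_torus j s) x = (\<lambda>m. a m + s * b m)"
proof -
  define moved where "moved m \<longleftrightarrow> odd m \<and> (m div 2) mod k = j" for m
  show ?thesis
    unfolding torus_coords_def coord_torus_def
    by (intro exI[of _ "\<lambda>m. if moved m then 0 else x m"] exI[of _ "\<lambda>m. if moved m then x m else 0"])
      (auto simp: fun_eq_iff moved_def)
qed

text \<open>Every defining polynomial of \<open>C\<close> restricts to a univariate polynomial in \<open>s\<close>.\<close>
lemma coord_torus_finite_or_all:
  assumes C: "closedin (sym_zariski k r) C" and A: "A \<in> topspace (sym_zariski k r)"
  shows "finite {s \<in> -{0}. torus_act (coord_torus j s) ` A \<in> C} \<or>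
    (\<forall>s\<in>-{0}. torus_act (coord_torus j s) ` A \<in> C)"
proof -
  obtain F where F: "F \<subseteq> polyfun" "\<forall>x\<in>tup_dom k r. tup_set k r x \<in> C \<longleftrightarrow> x \<in> zeroset F"
    using C unfolding closedin_sym_zariski_iff by blast
  obtain x where x: "x \<in> tup_dom k r" "A = tup_set k r x"
    using A unfolding topspace_sym_zariski by blast
  obtain a b where affine: "\<And>s. torus_coords k (coord_torus j s) x = (\<lambda>m. a m + s * b m)"
    using torus_coords_coord_torus_affine by blast
  have mem: "torus_act (coord_torus j s) ` A \<in> C \<longleftrightarrow> (\<forall>f\<in>F. f (\<lambda>m. a m + s * b m) = 0)"
    if "s \<noteq> 0" for s
  proof -
    have "torus_coords k (coord_torus j s) x \<in> tup_dom k r"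
      using torus_coords_tup_dom[OF coord_torus_nonzero[OF that] x(1)] .
    then show ?thesis
      using F(2) unfolding x(2) tup_set_torus_coords[symmetric] affine zeroset_iff by blast
  qed
  show ?thesis
  proof (cases "\<forall>f\<in>F. \<forall>s. f (\<lambda>m. a m + s * b m) = 0")
    case True
    then show ?thesis
      using mem by simp
  next
    case False
    then obtain f s0 where f: "f \<in> F" "f (\<lambda>m. a m + s0 * b m) \<noteq> 0"
      by blast
    obtain p where p: "\<forall>s. f (\<lambda>m. a m + s * b m) = poly p s"
      using polyfun_on_line F(1) f(1) by blast
    have "p \<noteq> 0"
      using p f(2) by auto
    moreover have "{s \<in> -{0}. torus_act (coord_torus j s) ` A \<in> C} \<subseteq> {s. poly p s = 0}"
    proof
      fix s assume "s \<in> {s \<in> -{0}. torus_act (coord_torus j s) ` A \<in> C}"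
      then have "f (\<lambda>m. a m + s * b m) = 0"
        using mem f(1) by blast
      then show "s \<in> {s. poly p s = 0}"
        using p by simp
    qed
    ultimately show ?thesis
      using poly_roots_finite finite_subset by blast
  qed
qed

lemma nuv_scale_snd:
  "nuv d k (\<lambda>i. (fst (w i), t i * snd (w i))) e = (\<Prod>i<k. t i ^ e i) * nuv d k w e"
proof (cases "mindex d k e")
  case True
  have "(\<Prod>i<k. of_nat (d i choose e i) * fst (w i) ^ (d i - e i) * (t i * snd (w i)) ^ e i)
      = (\<Prod>i<k. t i ^ e i * (of_nat (d i choose e i) * fst (w i) ^ (d i - e i) * snd (w i) ^ e i))"
    by (simp only: power_mult_distrib mult_ac)
  then show ?thesis
    unfolding nuv_def using True by (simp add: prod.distrib)
qed (simp add: nuv_def)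

lemma in_span_smult:
  assumes "in_span d k q A"
  shows "in_span d k (\<lambda>e. a * q e) A"
proof -
  obtain c v where "finite A" "\<forall>p\<in>A. \<forall>i<k. v p i \<noteq> 0 \<and> p i = line (v p i)"
    and "q = (\<lambda>e. \<Sum>p\<in>A. c p * nuv d k (v p) e)"
    using assms unfolding in_span_def by blast
  then show ?thesis
    unfolding in_span_def
    by (intro conjI exI[of _ "\<lambda>p. a * c p"] exI[of _ v]) (simp_all add: sum_distrib_left mult.assoc)
qed

lemma in_span_torus_act:
  assumes t: "\<forall>i. t i \<noteq> 0" and A: "in_span d k q A"
  shows "in_span d k (\<lambda>e. (\<Prod>i<k. t i ^ e i) * q e) (torus_act t ` A)"
proof -
  obtain c v where fin: "finite A" and v: "\<forall>p\<in>A. \<forall>i<k. v p i \<noteq> 0 \<and> p i = line (v p i)"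
    and q: "q = (\<lambda>e. \<Sum>p\<in>A. c p * nuv d k (v p) e)"
    using A unfolding in_span_def by blast
  define undo where "undo = torus_act (\<lambda>i. 1 / t i)"
  have undo: "undo (torus_act t p) = p" for p
    unfolding undo_def torus_act_mult using t by simp
  define v' where "v' p' = (\<lambda>i. (fst (v (undo p') i), t i * snd (v (undo p') i)))" for p'
  have lines: "v' p' i \<noteq> 0 \<and> p' i = line (v' p' i)" if p': "p' \<in> torus_act t ` A" and i: "i < k" for p' i
  proof -
    obtain p where p: "p \<in> A" "p' = torus_act t p"
      using p' by blast
    have "v p i \<noteq> 0" "p i = line (v p i)"
      using v p(1) i by auto
    from torus_act_line_rep[of t "v p i" p i, OF t this] show ?thesis
      unfolding p(2) v'_def undo by simp
  qed
  have coeffs: "(\<Prod>i<k. t i ^ e i) * q e = (\<Sum>p'\<in>torus_act t ` A. c (undo p') * nuv d k (v' p') e)"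
    for e
  proof -
    have "(\<Sum>p'\<in>torus_act t ` A. c (undo p') * nuv d k (v' p') e) =
        (\<Sum>p\<in>A. c p * nuv d k (v' (torus_act t p)) e)"
      using inj_torus_act[OF t] by (simp add: sum.reindex inj_on_def undo)
    also have "\<dots> = (\<Prod>i<k. t i ^ e i) * q e"
      unfolding q v'_def undo nuv_scale_snd by (simp add: sum_distrib_left mult_ac)
    finally show ?thesis ..
  qed
  show ?thesis
    unfolding in_span_def
  proof (intro conjI exI)
    show "finite (torus_act t ` A)"
      using fin by simp
    show "\<forall>p'\<in>torus_act t ` A. \<forall>i<k. v' p' i \<noteq> 0 \<and> p' i = line (v' p' i)"
      using lines by blast
    show "(\<lambda>e. (\<Prod>i<k. t i ^ e i) * q e) = (\<lambda>e. \<Sum>p'\<in>torus_act t ` A. c (undo p') * nuv d k (v' p') e)"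
      using coeffs by simp
  qed
qed

lemma Wtensor_torus_weight: "(\<Prod>i<k. t i ^ e i) * Wtensor d k e = (\<Prod>i<k. t i) * Wtensor d k e"
  unfolding Wtensor_def by simp

lemma torus_act_decomp_set_Wtensor:
  assumes t: "\<forall>i. t i \<noteq> 0" and A: "A \<in> decomp_set d k (Wtensor d k)"
  shows "torus_act t ` A \<in> decomp_set d k (Wtensor d k)"
proof -
  have "in_span d k (Wtensor d k) A"
    using A unfolding decomp_set_def by blast
  from in_span_torus_act[OF t this]
  have "in_span d k (\<lambda>e. (\<Prod>i<k. t i) * Wtensor d k e) (torus_act t ` A)"
    unfolding Wtensor_torus_weight .
  then have "in_span d k (\<lambda>e. 1 / (\<Prod>i<k. t i) * ((\<Prod>i<k. t i) * Wtensor d k e)) (torus_act t ` A)"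
    by (rule in_span_smult)
  moreover have "(\<Prod>i<k. t i) \<noteq> 0"
    using t by simp
  ultimately have "in_span d k (Wtensor d k) (torus_act t ` A)"
    by simp
  moreover have "torus_act t ` A \<subseteq> P1k k"
    using A torus_act_P1k[OF t] unfolding decomp_set_def by blast
  moreover have "card (torus_act t ` A) = card A"
    using inj_torus_act[OF t] by (simp add: card_image inj_on_def inj_def)
  ultimately show ?thesis
    using A unfolding decomp_set_def by simp
qed

text \<open>The coefficient of \<open>x^(d-1) y\<close> in \<open>(a x + b y)^d\<close> is \<open>d a^(d-1) b\<close>; for \<open>d \<ge> 2\<close> it is nonzero
  only if both \<open>a\<close> and \<open>b\<close> are.\<close>
lemma in_span_Wtensor_generic_point:
  assumes d: "\<forall>i<k. d i \<ge> 2" and A: "in_span d k (Wtensor d k) A"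
  shows "\<exists>q\<in>A. \<forall>i<k. \<exists>a b. a \<noteq> 0 \<and> b \<noteq> 0 \<and> q i = line (a, b)"
proof -
  obtain c v where v: "\<forall>p\<in>A. \<forall>i<k. v p i \<noteq> 0 \<and> p i = line (v p i)"
    and W: "Wtensor d k = (\<lambda>e. \<Sum>p\<in>A. c p * nuv d k (v p) e)"
    using A unfolding in_span_def by blast
  define ones where "ones i = (if i < k then 1 else 0 :: nat)" for i
  have ones: "mindex d k ones"
    unfolding mindex_def ones_def using d by auto
  then have "Wtensor d k ones = 1"
    unfolding Wtensor_def ones_def by simp
  then have "(\<Sum>p\<in>A. c p * nuv d k (v p) ones) \<noteq> 0"
    using fun_cong[OF W, of ones] by simp
  then obtain q where q: "q \<in> A" "c q * nuv d k (v q) ones \<noteq> 0"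
    by (rule sum.not_neutral_contains_not_neutral)
  then have factors: "(\<Prod>i<k. of_nat (d i choose ones i) * fst (v q i) ^ (d i - ones i) * snd (v q i) ^ ones i) \<noteq> 0"
    unfolding nuv_def using ones by simp
  have "\<exists>a b. a \<noteq> 0 \<and> b \<noteq> 0 \<and> q i = line (a, b)" if i: "i < k" for i
  proof -
    have "of_nat (d i choose 1) * fst (v q i) ^ (d i - 1) * snd (v q i) \<noteq> 0"
      using factors i by (simp add: ones_def)
    moreover have "d i - 1 \<noteq> 0"
      using d i by auto
    ultimately have "fst (v q i) \<noteq> 0" "snd (v q i) \<noteq> 0"
      by auto
    moreover have "q i = line (fst (v q i), snd (v q i))"
      using v q(1) i by simp
    ultimately show ?thesis
      by blast
  qed
  then show ?thesis
    using q(1) by blast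
qed

lemma torus_act_transitive_generic:
  assumes q: "q \<in> P1k k" "\<forall>i<k. \<exists>a b. a \<noteq> 0 \<and> b \<noteq> 0 \<and> q i = line (a, b)"
    and p: "p \<in> P1k k" "\<forall>i<k. \<exists>a b. a \<noteq> 0 \<and> b \<noteq> 0 \<and> p i = line (a, b)"
  shows "\<exists>t. (\<forall>i. t i \<noteq> 0) \<and> (\<forall>i\<ge>k. t i = 1) \<and> torus_act t q = p"
proof -
  have "\<exists>\<tau>. i < k \<longrightarrow> \<tau> \<noteq> 0 \<and> torus_act (\<lambda>_. \<tau>) q i = p i" for i
  proof (cases "i < k")
    case True
    obtain a b a' b' where ab: "a \<noteq> 0" "b \<noteq> 0" "q i = line (a, b)"
      and ab': "a' \<noteq> 0" "b' \<noteq> 0" "p i = line (a', b')"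
      using q(2) p(2) True by blast
    obtain \<tau> where "\<tau> \<noteq> 0" "line (a, \<tau> * b) = line (a', b')"
      using line_scale_snd_transitive[OF ab(1,2) ab'(1,2)] by blast
    then show ?thesis
      using torus_act_line[of q i a b "\<lambda>_. \<tau>", OF ab(3)] ab'(3) by auto
  qed simp
  then have "\<forall>i. \<exists>\<tau>. i < k \<longrightarrow> \<tau> \<noteq> 0 \<and> torus_act (\<lambda>_. \<tau>) q i = p i"
    by blast
  then obtain \<tau> where \<tau>: "\<forall>i. i < k \<longrightarrow> \<tau> i \<noteq> 0 \<and> torus_act (\<lambda>_. \<tau> i) q i = p i"
    by (rule choice[THEN exE])
  define t where "t i = (if i < k then \<tau> i else 1)" for i
  have "torus_act t q i = p i" for i
  proof (cases "i < k")
    case True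
    then show ?thesis
      using \<tau> unfolding t_def torus_act_def by simp
  next
    case False
    then show ?thesis
      using q(1) p(1) unfolding P1k_def torus_act_def by simp
  qed
  moreover have "\<forall>i. t i \<noteq> 0" "\<forall>i\<ge>k. t i = 1"
    using \<tau> unfolding t_def by auto
  ultimately show ?thesis
    by blast
qed

lemma closedin_sym_zariski_coord_line:
  assumes j: "j < k" and ab: "a \<noteq> 0" "b \<noteq> 0"
  shows "closedin (sym_zariski k r) {B \<in> topspace (sym_zariski k r). \<exists>p\<in>B. p j = line (a, b)}"
proof -
  define f where "f x = (\<Prod>m<r. x (2 * (k * m + j)) * b - x (2 * (k * m + j) + 1) * a)" for x
  have "f \<in> polyfun"
    unfolding f_def by (rule polyfun_prod) (rule polyfun_cross_diff)
  moreover have "tup_set k r x \<in> {B \<in> topspace (sym_zariski k r). \<exists>p\<in>B. p j = line (a, b)} \<longleftrightarrow>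
      x \<in> zeroset {f}" if x: "x \<in> tup_dom k r" for x
  proof -
    have on_line: "tup_point k x m j = line (a, b) \<longleftrightarrow>
        x (2 * (k * m + j)) * b - x (2 * (k * m + j) + 1) * a = 0" if m: "m < r" for m
    proof -
      have nz: "(x (2 * (k * m + j)), x (2 * (k * m + j) + 1)) \<noteq> 0"
        using x m j unfolding tup_dom_def by blast
      have "tup_point k x m j = line (x (2 * (k * m + j)), x (2 * (k * m + j) + 1))"
        using j by (simp add: tup_point_def)
      then show ?thesis
        using line_eq_imp_cross[of "x (2 * (k * m + j))" "x (2 * (k * m + j) + 1)" a b]
          cross_imp_line_eq[OF nz ab(1)] by auto
    qed
    have "tup_set k r x \<in> {B \<in> topspace (sym_zariski k r). \<exists>p\<in>B. p j = line (a, b)} \<longleftrightarrow>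
        (\<exists>m<r. tup_point k x m j = line (a, b))"
      using x unfolding topspace_sym_zariski tup_set_def by auto
    also have "\<dots> \<longleftrightarrow> (\<exists>m<r. x (2 * (k * m + j)) * b - x (2 * (k * m + j) + 1) * a = 0)"
      using on_line by blast
    also have "\<dots> \<longleftrightarrow> x \<in> zeroset {f}"
      unfolding zeroset_iff f_def by (auto simp: prod_zero_iff)
    finally show ?thesis .
  qed
  moreover have "{B \<in> topspace (sym_zariski k r). \<exists>p\<in>B. p j = line (a, b)} \<subseteq> tup_set k r ` tup_dom k r"
    unfolding topspace_sym_zariski by blast
  ultimately show ?thesis
    unfolding closedin_sym_zariski_iff by blast
qed

lemma infinite_nonzero_complex: "infinite (-{0 :: complex})"
proof -
  have "infinite (UNIV - {0 :: complex})"
    by (rule infinite_remove) (rule infinite_UNIV_char_0)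
  then show ?thesis
    by (simp add: Compl_eq_Diff_UNIV)
qed

lemma irreducible_in_coord_torus_translates:
  assumes "irreducible_in (sym_zariski k r) S"
  shows "irreducible_in (sym_zariski k r) (\<Union>s\<in>-{0}. image (torus_act (coord_torus j s)) ` S)"
proof (rule irreducible_in_UN_translates[OF assms infinite_nonzero_complex])
  fix s :: complex assume "s \<in> -{0}"
  then show "continuous_map (sym_zariski k r) (sym_zariski k r) (image (torus_act (coord_torus j s)))"
    by (intro continuous_map_torus_act coord_torus_nonzero) simp
next
  fix A C assume "A \<in> S" "closedin (sym_zariski k r) C"
  moreover have "S \<subseteq> topspace (sym_zariski k r)"
    using assms unfolding irreducible_in_def by blast
  ultimately show "finite {s \<in> -{0}. image (torus_act (coord_torus j s)) A \<in> C} \<or>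
      (\<forall>s\<in>-{0}. image (torus_act (coord_torus j s)) A \<in> C)"
    using coord_torus_finite_or_all by blast
qed

definition coord_orbit ::
    "(nat \<Rightarrow> (complex \<times> complex) set) set \<Rightarrow> nat \<Rightarrow> (nat \<Rightarrow> (complex \<times> complex) set) set set" where
  "coord_orbit A j = {torus_act t ` A | t. (\<forall>i. t i \<noteq> 0) \<and> (\<forall>i\<ge>j. t i = 1)}"

lemma coord_orbit_0: "coord_orbit A 0 = {A}"
proof -
  have "torus_act t ` A = A" if "\<forall>i\<ge>0. t i = (1 :: complex)" for t :: "nat \<Rightarrow> complex"
  proof -
    have "t = (\<lambda>i. 1)"
      using that by (intro ext) simp
    then show ?thesis
      by simp
  qed
  then show ?thesis
    unfolding coord_orbit_def by (auto intro!: exI[of _ "\<lambda>i. 1"])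
qed

lemma coord_orbit_mono: "j \<le> j' \<Longrightarrow> coord_orbit A j \<subseteq> coord_orbit A j'"
  unfolding coord_orbit_def by force

lemma coord_orbit_Suc:
  "coord_orbit A (Suc j) = (\<Union>s\<in>-{0}. image (torus_act (coord_torus j s)) ` coord_orbit A j)"
proof (intro equalityI subsetI)
  fix B assume "B \<in> coord_orbit A (Suc j)"
  then obtain t where t: "\<forall>i. t i \<noteq> 0" "\<forall>i\<ge>Suc j. t i = 1" and B: "B = torus_act t ` A"
    unfolding coord_orbit_def by blast
  have "torus_act (t(j := 1)) ` A \<in> coord_orbit A j"
    unfolding coord_orbit_def using t by (intro CollectI exI[of _ "t(j := 1)"]) (auto simp: Suc_le_eq)
  moreover have "(\<lambda>i. coord_torus j (t j) i * (t(j := 1)) i) = t"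
    by (auto simp: coord_torus_def)
  then have "B = torus_act (coord_torus j (t j)) ` torus_act (t(j := 1)) ` A"
    unfolding B image_image torus_act_mult by simp
  ultimately show "B \<in> (\<Union>s\<in>-{0}. image (torus_act (coord_torus j s)) ` coord_orbit A j)"
    using t(1) by blast
next
  fix B assume "B \<in> (\<Union>s\<in>-{0}. image (torus_act (coord_torus j s)) ` coord_orbit A j)"
  then obtain s t where "s \<noteq> 0" "\<forall>i. t i \<noteq> 0" "\<forall>i\<ge>j. t i = 1"
    and B: "B = torus_act (coord_torus j s) ` torus_act t ` A"
    unfolding coord_orbit_def by blast
  then show "B \<in> coord_orbit A (Suc j)"
    unfolding coord_orbit_def B image_image torus_act_mult
    by (intro CollectI exI[of _ "\<lambda>i. coord_torus j s i * t i"]) (auto simp: coord_torus_def)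
qed

lemma irreducible_coord_orbit:
  "A \<in> topspace (sym_zariski k r) \<Longrightarrow> irreducible_in (sym_zariski k r) (coord_orbit A j)"
proof (induction j)
  case 0
  then show ?case
    unfolding coord_orbit_0 by (rule irreducible_in_sing)
next
  case (Suc j)
  then show ?case
    unfolding coord_orbit_Suc by (intro irreducible_in_coord_torus_translates)
qed

lemma coord_orbit_keeps_coord:
  assumes "B \<in> coord_orbit A j" "q \<in> A" "q j = line (a, b)"
  shows "\<exists>p\<in>B. p j = line (a, b)"
proof -
  obtain t where "t j = 1" "B = torus_act t ` A"
    using assms(1) unfolding coord_orbit_def by blast
  then show ?thesis
    using assms(2) torus_act_line[of q j a b t, OF assms(3)] by auto
qed

lemma coord_torus_param_determined:
  assumes w: "w \<noteq> 0" "p j = line w" and ab: "a \<noteq> 0" "b \<noteq> 0"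
    and on_line: "torus_act (coord_torus j s) p j = line (a, b)"
  shows "s = fst w * b / (snd w * a)"
proof -
  obtain u v where uv: "w = (u, v)"
    by (cases w)
  have "torus_act (coord_torus j s) p j = line (u, s * v)"
    using torus_act_line[of p j u v "coord_torus j s"] w(2) uv by (simp add: coord_torus_def)
  with on_line have "line (u, s * v) = line (a, b)"
    by simp
  then have cross: "u * b = s * v * a"
    by (rule line_eq_imp_cross)
  moreover have "v \<noteq> 0"
    using cross ab w(1) uv by (auto simp: zero_prod_def)
  ultimately show ?thesis
    using ab uv by (simp add: field_simps)
qed

lemma coord_orbit_Suc_leaves_line:
  assumes A: "finite A" "A \<subseteq> P1k k" and j: "j < k" and ab: "a \<noteq> 0" "b \<noteq> 0"
  shows "\<exists>B\<in>coord_orbit A (Suc j). \<forall>p\<in>B. p j \<noteq> line (a, b)"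
proof -
  have "\<forall>p\<in>A. \<exists>w. w \<noteq> 0 \<and> p j = line w"
    using A(2) j unfolding P1k_def by blast
  then obtain V where V: "\<forall>p\<in>A. V p \<noteq> 0 \<and> p j = line (V p)"
    by (rule bchoice[THEN exE])
  define bad where "bad = (\<lambda>p. fst (V p) * b / (snd (V p) * a)) ` A"
  have "infinite (-{0} - bad)"
    unfolding bad_def using A(1) by (intro Diff_infinite_finite infinite_nonzero_complex) simp
  then have "-{0} - bad \<noteq> {}"
    by (intro notI) simp
  then obtain s where s: "s \<noteq> 0" "s \<notin> bad"
    by blast
  have "torus_act (coord_torus j s) p j \<noteq> line (a, b)" if p: "p \<in> A" for p
  proof
    assume "torus_act (coord_torus j s) p j = line (a, b)"
    then have "s = fst (V p) * b / (snd (V p) * a)"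
      using coord_torus_param_determined[of "V p" p j a b s] V p ab by blast
    then show False
      using s(2) p unfolding bad_def by blast
  qed
  moreover have "torus_act (coord_torus j s) ` A \<in> coord_orbit A (Suc j)"
    unfolding coord_orbit_def using coord_torus_nonzero[OF s(1)]
    by (intro CollectI exI[of _ "coord_torus j s"]) (auto simp: coord_torus_def)
  ultimately show ?thesis
    by blast
qed

section \<open>Irreducible components of the decomposition set\<close>

context
  fixes k r :: nat and d :: "nat \<Rightarrow> nat" and \<Gamma> :: "(nat \<Rightarrow> (complex \<times> complex) set) set set"
  assumes component: "irreducible_component (sym_zariski k r) (decomp_set d k (Wtensor d k)) \<Gamma>"
begin

lemma component_subset_decomp_set: "\<Gamma> \<subseteq> decomp_set d k (Wtensor d k)"
  using component unfolding irreducible_component_def by blast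

lemma irreducible_component: "irreducible_in (sym_zariski k r) \<Gamma>"
  using component unfolding irreducible_component_def by blast

text \<open>The union of the translates of \<open>\<Gamma>\<close> is again an irreducible subset of the decomposition
  set, so by maximality it is \<open>\<Gamma>\<close> itself.\<close>
lemma component_coord_torus_stable:
  assumes "s \<noteq> 0" "B \<in> \<Gamma>"
  shows "torus_act (coord_torus j s) ` B \<in> \<Gamma>"
proof -
  define \<Gamma>' where "\<Gamma>' = (\<Union>s\<in>-{0}. image (torus_act (coord_torus j s)) ` \<Gamma>)"
  have "irreducible_in (sym_zariski k r) \<Gamma>'"
    unfolding \<Gamma>'_def using irreducible_component by (rule irreducible_in_coord_torus_translates)
  moreover have "\<Gamma> \<subseteq> \<Gamma>'"
  proof
    fix C assume "C \<in> \<Gamma>"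
    then have "image (torus_act (coord_torus j 1)) C \<in> image (torus_act (coord_torus j 1)) ` \<Gamma>"
      by (rule imageI)
    then show "C \<in> \<Gamma>'"
      unfolding \<Gamma>'_def by (intro UN_I[of 1]) simp_all
  qed
  moreover have "\<Gamma>' \<subseteq> decomp_set d k (Wtensor d k)"
  proof
    fix C assume "C \<in> \<Gamma>'"
    then obtain s' C' where "s' \<noteq> 0" "C' \<in> \<Gamma>" "C = torus_act (coord_torus j s') ` C'"
      unfolding \<Gamma>'_def by blast
    then show "C \<in> decomp_set d k (Wtensor d k)"
      using torus_act_decomp_set_Wtensor[OF coord_torus_nonzero] component_subset_decomp_set by blast
  qed
  ultimately have "\<Gamma>' = \<Gamma>"
    using component unfolding irreducible_component_def by blast
  then show ?thesis
    using assms unfolding \<Gamma>'_def by blast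
qed

lemma coord_orbit_subset_component: "A \<in> \<Gamma> \<Longrightarrow> coord_orbit A j \<subseteq> \<Gamma>"
proof (induction j)
  case 0
  then show ?case
    by (simp add: coord_orbit_0)
next
  case (Suc j)
  then show ?case
    unfolding coord_orbit_Suc using component_coord_torus_stable by blast
qed

lemma component_covers_generic_points:
  assumes d: "\<forall>i<k. d i \<ge> 2" and p: "p \<in> P1k k"
    and off_axes: "\<forall>i<k. p i \<noteq> line (1, 0) \<and> p i \<noteq> line (0, 1)"
  shows "\<exists>A\<in>\<Gamma>. p \<in> A"
proof -
  obtain A where A: "A \<in> \<Gamma>"
    using irreducible_component unfolding irreducible_in_def by blast
  then have A_P1k: "A \<subseteq> P1k k" and span: "in_span d k (Wtensor d k) A"
    using component_subset_decomp_set unfolding decomp_set_def by blast+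
  obtain q where q: "q \<in> A" "\<forall>i<k. \<exists>a b. a \<noteq> 0 \<and> b \<noteq> 0 \<and> q i = line (a, b)"
    using in_span_Wtensor_generic_point[OF d span] by blast
  have "q \<in> P1k k"
    using A_P1k q(1) by blast
  moreover have "\<forall>i<k. \<exists>a b. a \<noteq> 0 \<and> b \<noteq> 0 \<and> p i = line (a, b)"
  proof (intro allI impI)
    fix i assume i: "i < k"
    obtain w where w: "w \<noteq> 0" "p i = line w"
      using p i unfolding P1k_def by blast
    then have "fst w \<noteq> 0 \<and> snd w \<noteq> 0"
      using line_neq_axes_iff[OF w(1)] off_axes[rule_format, OF i] by simp
    with w(2) show "\<exists>a b. a \<noteq> 0 \<and> b \<noteq> 0 \<and> p i = line (a, b)"
      by (intro exI[of _ "fst w"] exI[of _ "snd w"]) simp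
  qed
  ultimately obtain t where t: "\<forall>i. t i \<noteq> 0" "\<forall>i\<ge>k. t i = 1" "torus_act t q = p"
    using torus_act_transitive_generic[OF _ q(2) p] by blast
  have "torus_act t ` A \<in> coord_orbit A k"
    unfolding coord_orbit_def by (intro CollectI exI[of _ t]) (simp add: t(1,2))
  then have "torus_act t ` A \<in> \<Gamma>"
    using coord_orbit_subset_component[OF A] by (rule subsetD[rotated])
  moreover have "p \<in> torus_act t ` A"
    unfolding t(3)[symmetric] using q(1) by (rule imageI)
  ultimately show ?thesis
    by (rule bexI[rotated])
qed

text \<open>The \<open>j\<close>-th coordinate of \<open>q\<close> is fixed along the orbits under the first \<open>j\<close> coordinate
  subgroups, but is moved off the point \<open>[a : b]\<close> by the next one.\<close>
lemma component_orbit_closure_strict_mono: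
  assumes A: "A \<in> \<Gamma>" and q: "q \<in> A" "q j = line (a, b)" and ab: "a \<noteq> 0" "b \<noteq> 0" and j: "j < k"
  shows "\<Gamma> \<inter> sym_zariski k r closure_of coord_orbit A j \<subset>
    \<Gamma> \<inter> sym_zariski k r closure_of coord_orbit A (Suc j)"
proof -
  let ?X = "sym_zariski k r"
  let ?K = "{B \<in> topspace ?X. \<exists>p\<in>B. p j = line (a, b)}"
  have "finite A" "A \<subseteq> P1k k"
    using A component_subset_decomp_set unfolding decomp_set_def in_span_def by blast+
  have orbits: "coord_orbit A i \<subseteq> \<Gamma> \<inter> topspace ?X" for i
    using coord_orbit_subset_component[OF A] irreducible_component unfolding irreducible_in_def by blast
  have "coord_orbit A j \<subseteq> ?K"
  proof
    fix B assume "B \<in> coord_orbit A j"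
    then show "B \<in> ?K"
      using coord_orbit_keeps_coord[OF _ q] orbits[of j] by auto
  qed
  then have closure_K: "?X closure_of coord_orbit A j \<subseteq> ?K"
    by (rule closure_of_minimal) (rule closedin_sym_zariski_coord_line[OF j ab])
  obtain B where B: "B \<in> coord_orbit A (Suc j)" "\<forall>p\<in>B. p j \<noteq> line (a, b)"
    using coord_orbit_Suc_leaves_line[OF \<open>finite A\<close> \<open>A \<subseteq> P1k k\<close> j ab] by auto
  have "B \<notin> ?K"
    using B(2) by auto
  then have "B \<notin> \<Gamma> \<inter> ?X closure_of coord_orbit A j"
    using closure_K by auto
  moreover have "B \<in> \<Gamma> \<inter> ?X closure_of coord_orbit A (Suc j)"
    using B(1) orbits[of "Suc j"] closure_of_subset[of "coord_orbit A (Suc j)" ?X] by auto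
  moreover have "?X closure_of coord_orbit A j \<subseteq> ?X closure_of coord_orbit A (Suc j)"
    using closure_of_mono[OF coord_orbit_mono[of j "Suc j" A]] by simp
  ultimately show ?thesis
    by auto
qed

lemma dim_ge_component:
  assumes d: "\<forall>i<k. d i \<ge> 2"
  shows "dim_ge (sym_zariski k r) \<Gamma> k"
proof -
  let ?X = "sym_zariski k r"
  obtain A where A: "A \<in> \<Gamma>"
    using irreducible_component unfolding irreducible_in_def by blast
  then have "in_span d k (Wtensor d k) A"
    using component_subset_decomp_set unfolding decomp_set_def by blast
  then obtain q where q: "q \<in> A" "\<forall>i<k. \<exists>a b. a \<noteq> 0 \<and> b \<noteq> 0 \<and> q i = line (a, b)"
    using in_span_Wtensor_generic_point[OF d] by blast
  have A_top: "A \<in> topspace ?X"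
    using A irreducible_component unfolding irreducible_in_def by blast
  define Z where "Z j = \<Gamma> \<inter> ?X closure_of coord_orbit A j" for j
  have "closedin (subtopology ?X \<Gamma>) (Z j)" for j
    unfolding Z_def closedin_subtopology by (intro exI[of _ "?X closure_of coord_orbit A j"]) auto
  moreover have "irreducible_in ?X (Z j)" for j
  proof (rule irreducible_in_closure_of_between[OF irreducible_coord_orbit[OF A_top]])
    have "coord_orbit A j \<subseteq> \<Gamma> \<inter> topspace ?X"
      using coord_orbit_subset_component[OF A] irreducible_component unfolding irreducible_in_def by blast
    then show "coord_orbit A j \<subseteq> Z j"
      unfolding Z_def using closure_of_subset[of "coord_orbit A j" ?X] by auto
    show "Z j \<subseteq> ?X closure_of coord_orbit A j"
      unfolding Z_def by blast
  qed
  moreover have "Z j \<subset> Z (Suc j)" if j: "j < k" for j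
  proof -
    obtain a b where ab: "a \<noteq> 0" "b \<noteq> 0" "q j = line (a, b)"
      using q(2) j by auto
    from A q(1) ab(3) ab(1,2) j show ?thesis
      unfolding Z_def by (rule component_orbit_closure_strict_mono)
  qed
  ultimately show ?thesis
    unfolding dim_ge_def by blast
qed

end

theorem proposition5p4:
  fixes k :: nat and d :: "nat \<Rightarrow> nat" and \<Gamma> :: "(nat \<Rightarrow> (complex \<times> complex) set) set set"
  assumes "k \<ge> 1"
    and "\<forall>i<k. d i \<ge> 2"
    and "irreducible_component (sym_zariski k (SV_rank d k (Wtensor d k)))
           (decomp_set d k (Wtensor d k)) \<Gamma>"
  shows "dim_ge (sym_zariski k (SV_rank d k (Wtensor d k))) \<Gamma> k
    \<and> (\<forall>p\<in>P1k k. (\<forall>i<k. p i \<noteq> line (1, 0) \<and> p i \<noteq> line (0, 1)) \<longrightarrow> (\<exists>A\<in>\<Gamma>. p \<in> A))"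
  using dim_ge_component[OF assms(3,2)] component_covers_generic_points[OF assms(3,2)] by blast

end
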